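(* Let $p\ge1$, $n\ge1$, $i\in\{1,\dots,p\}$, and let $C_n^i$ be the cycle of the Schreier graph $\Gamma^p_n$ with vertex set $\{0,i\}^n$ and the edges labelled $e_i$ between them. Let $\phi_n^i$ be the nontrivial automorphism (reflection) of the cycle $C_n^i$ fixing $0^n$. Then for every vertex $v$ of $C_n^i$, the decorations attached at $v$ and at $\phi_n^i(v)$ are isomorphic graphs. Moreover, the vertices $v'$ of $C_n^i$ with $d(0^n,v')=d(0^n,v)$ are exactly $v$ and $\phi_n^i(v)$.
   Context: $X=\{0,1,\dots,p\}$; the star automaton group $\mathcal G_{S_p}$ is generated by the transformations $e_1,\dots,e_p$ of $X^\ast$ defined recursively by $e_i(0w)=i\,e_i(w)$, $e_i(iw)=0w$, $e_i(jw)=jw$ for $j\notin\{0,i\}$. $\Gamma^p_n$ has vertex set $X^n$ and, for each $v$ and each $j$, an edge labelled $e_j$ joining $v$ and $e_j(v)$ (loops allowed). $C_n^i$ is the $e_i$-orbit of $0^n$, a cycle of length $2^n$. For a vertex $v$ of $C_n^i$, the decoration attached at $v$ is the connected component containing $v$ of the graph obtained from $\Gamma^p_n$ by deleting the edges of $C_n^i$. $d$ denotes the graph distance in $\Gamma^p_n$. *)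

theory Defs
  imports Main
begin

text \<open>Words over X = {0,...,p} are lists of naturals. The generator e_i of the star
automaton group acts on words by the given recursion.\<close>

fun star_gen :: "nat \<Rightarrow> nat list \<Rightarrow> nat list" where
  "star_gen i [] = []"
| "star_gen i (x # w) =
     (if x = 0 then i # star_gen i w else if x = i then 0 # w else x # w)"

definition verts :: "nat \<Rightarrow> nat \<Rightarrow> nat list set" where
  "verts p n = {w. length w = n \<and> set w \<subseteq> {0..p}}"

text \<open>Edges of Gamma^p_n: for each vertex v and each j in {1..p} one edge (v,j),
labelled e_j, joining v and e_j(v) (loops allowed, multigraph).\<close>
definition edges :: "nat \<Rightarrow> nat \<Rightarrow> (nat list \<times> nat) set" where
  "edges p n = {(v, j). v \<in> verts p n \<and> j \<in> {1..p}}"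

definition ends :: "nat list \<times> nat \<Rightarrow> nat list set" where
  "ends x = {fst x, star_gen (snd x) (fst x)}"

definition zeros :: "nat \<Rightarrow> nat list" where
  "zeros n = replicate n 0"

definition cyc :: "nat \<Rightarrow> nat \<Rightarrow> nat list set" where
  "cyc i n = {(star_gen i ^^ k) (zeros n) | k. True}"

text \<open>The reflection phi_n^i of the cycle fixing 0^n:
e_i^k(0^n) \<mapsto> e_i^(2^n - k)(0^n) = e_i^(-k)(0^n).\<close>
definition phi :: "nat \<Rightarrow> nat \<Rightarrow> nat list \<Rightarrow> nat list" where
  "phi i n v = (star_gen i ^^ (2 ^ n - (LEAST k. (star_gen i ^^ k) (zeros n) = v))) (zeros n)"

definition deco_edges_all :: "nat \<Rightarrow> nat \<Rightarrow> nat \<Rightarrow> (nat list \<times> nat) set" where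
  "deco_edges_all p n i = {x \<in> edges p n. \<not> (snd x = i \<and> fst x \<in> cyc i n)}"

definition link_rel :: "(nat list \<times> nat) set \<Rightarrow> nat list rel" where
  "link_rel E = {(a, b). \<exists>x\<in>E. ends x = {a, b}}"

text \<open>Decoration attached at v: the connected component containing v of Gamma^p_n
minus the edges of C_n^i (vertex set and edge set).\<close>
definition deco_verts :: "nat \<Rightarrow> nat \<Rightarrow> nat \<Rightarrow> nat list \<Rightarrow> nat list set" where
  "deco_verts p n i v = {w. (v, w) \<in> (link_rel (deco_edges_all p n i))\<^sup>*}"

definition deco_edges :: "nat \<Rightarrow> nat \<Rightarrow> nat \<Rightarrow> nat list \<Rightarrow> (nat list \<times> nat) set" where
  "deco_edges p n i v = {x \<in> deco_edges_all p n i. fst x \<in> deco_verts p n i v}"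

definition mg_iso :: "'v set \<Rightarrow> 'e set \<Rightarrow> 'v set \<Rightarrow> 'e set \<Rightarrow> ('e \<Rightarrow> 'v set) \<Rightarrow> bool" where
  "mg_iso V1 E1 V2 E2 en \<longleftrightarrow>
     (\<exists>f g. bij_betw f V1 V2 \<and> bij_betw g E1 E2 \<and> (\<forall>x\<in>E1. en (g x) = f ` en x))"

definition gdist :: "nat \<Rightarrow> nat \<Rightarrow> nat list \<Rightarrow> nat list \<Rightarrow> nat" where
  "gdist p n u w = (LEAST k. (u, w) \<in> link_rel (edges p n) ^^ k)"

end

theory Submission
  imports Defs
begin

text \<open>
  For \<open>x \<in> {0, i}\<close> we have \<open>e\<^sub>i\<^sup>2\<^sup>k(x w) = x e\<^sub>i\<^sup>k(w)\<close>, so \<open>e\<^sub>i\<close> acts on \<open>{0, i}\<^sup>n\<close> like a binary odometer: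
  the orbit of \<open>0\<^sup>n\<close> is all of \<open>{0, i}\<^sup>n\<close>, and \<open>e\<^sub>i\<^sup>a(0\<^sup>n) = e\<^sub>i\<^sup>b(0\<^sup>n)\<close> iff \<open>a \<equiv> b (mod 2\<^sup>n)\<close>.
  The word map keeping everything up to the first letter \<open>i\<close> and swapping \<open>0\<close> and \<open>i\<close>
  afterwards fixes \<open>0\<^sup>n\<close> and conjugates \<open>e\<^sub>i\<close> to its inverse, hence it is \<open>\<phi>\<close>.

  An edge at a word \<open>t i s\<close> with \<open>s \<in> {0, i}\<^sup>*\<close> that is not a cycle edge changes only \<open>t\<close>.
  Hence the decoration at \<open>t i s\<close> consists of words ending in \<open>i s\<close>, and replacing this
  suffix by any \<open>i s'\<close> of the same length is an isomorphism onto the decoration at \<open>t i s'\<close>;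
  \<open>\<phi>(0\<^sup>m i s)\<close> is such a word.

  Collapsing every decoration onto its attaching vertex and then taking the cyclic distance
  to \<open>0\<^sup>n\<close> along \<open>C\<^sub>n\<^sup>i\<close> is 1-Lipschitz, so \<open>d(0\<^sup>n, e\<^sub>i\<^sup>k(0\<^sup>n)) = min(k, 2\<^sup>n - k)\<close>; on the cycle this
  value is taken exactly at \<open>e\<^sub>i\<^sup>k(0\<^sup>n)\<close> and at \<open>e\<^sub>i\<^sup>-\<^sup>k(0\<^sup>n) = \<phi>(e\<^sub>i\<^sup>k(0\<^sup>n))\<close>.
\<close>

lemma length_star_gen [simp]: "length (star_gen j w) = length w"
  by (induction w) auto

lemma length_star_gen_pow [simp]: "length ((star_gen j ^^ k) w) = length w"
  by (induction k) auto

lemma set_star_gen_diff: "set (star_gen j w) - {0, j} = set w - {0, j}"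
  by (induction w) auto

lemma set_star_gen_subset_iff: "set (star_gen j w) \<subseteq> {0, j} \<longleftrightarrow> set w \<subseteq> {0, j}"
  using set_star_gen_diff[of j w] by blast

lemma set_star_gen_pow_subset_iff: "set ((star_gen j ^^ k) w) \<subseteq> {0, j} \<longleftrightarrow> set w \<subseteq> {0, j}"
  by (induction k) (auto simp: set_star_gen_subset_iff)

lemma inj_star_gen: "inj (star_gen j)"
proof
  show "u = w" if "star_gen j u = star_gen j w" for u w
    using that
  proof (induction u arbitrary: w)
    case Nil
    then show ?case by (metis length_0_conv length_star_gen)
  next
    case (Cons x u)
    then show ?case by (cases w) (auto split: if_splits)
  qed
qed

lemma star_gen_append:
  "star_gen j (t @ w) = star_gen j t @ (if set t \<subseteq> {0} then star_gen j w else w)"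
  by (induction t) auto

lemma take_star_gen: "take m (star_gen j u) = star_gen j (take m u)"
  using star_gen_append[of j "take m u" "drop m u"] by (cases "m \<le> length u") auto

lemma drop_star_gen:
  "drop m (star_gen j u) = (if set (take m u) \<subseteq> {0} then star_gen j (drop m u) else drop m u)"
  using star_gen_append[of j "take m u" "drop m u"] by (cases "m \<le> length u") auto

lemma star_gen_pow_double:
  assumes "i \<noteq> 0" "x \<in> {0, i}"
  shows "(star_gen i ^^ (2 * k)) (x # w) = x # (star_gen i ^^ k) w"
proof (induction k)
  case (Suc k)
  have "(star_gen i ^^ (2 * Suc k)) (x # w) = star_gen i (star_gen i (x # (star_gen i ^^ k) w))"
    using Suc by (simp add: mult_2)
  also have "\<dots> = x # (star_gen i ^^ Suc k) w"
    using assms by auto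
  finally show ?case .
qed simp

lemma zeros_Suc: "zeros (Suc n) = 0 # zeros n"
  by (simp add: zeros_def)

lemma set_zeros: "set (zeros n) \<subseteq> {0, i}"
  by (auto simp: zeros_def)

lemma star_gen_pow_zeros_fixed_iff:
  assumes "i \<noteq> 0"
  shows "(star_gen i ^^ d) (zeros n) = zeros n \<longleftrightarrow> 2 ^ n dvd d"
proof (induction n arbitrary: d)
  case 0
  show ?case
    by (induction d) (auto simp: zeros_def)
next
  case (Suc n)
  obtain k where "d = 2 * k \<or> d = Suc (2 * k)"
    by (metis oddE evenE Suc_eq_plus1)
  then show ?case
  proof
    assume "d = 2 * k"
    then show ?thesis
      using Suc star_gen_pow_double[OF assms, of 0 k] by (simp add: zeros_Suc)
  next
    assume d: "d = Suc (2 * k)"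
    then have "odd d"
      by simp
    then have "\<not> 2 ^ Suc n dvd d"
      by (metis dvd_trans dvd_triv_left power_Suc)
    moreover have "(star_gen i ^^ d) (zeros (Suc n)) = i # star_gen i ((star_gen i ^^ k) (zeros n))"
      using star_gen_pow_double[OF assms, of 0 k] assms by (simp add: d zeros_Suc)
    ultimately show ?thesis
      using assms by (simp add: zeros_Suc)
  qed
qed

lemma star_gen_pow_zeros_eq_iff:
  assumes "i \<noteq> 0"
  shows "(star_gen i ^^ a) (zeros n) = (star_gen i ^^ b) (zeros n) \<longleftrightarrow> a mod 2 ^ n = b mod 2 ^ n"
proof -
  have "(star_gen i ^^ c) (zeros n) = (star_gen i ^^ (c + d)) (zeros n) \<longleftrightarrow>
        c mod 2 ^ n = (c + d) mod 2 ^ n" for c d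
  proof -
    have "(star_gen i ^^ (c + d)) (zeros n) = (star_gen i ^^ c) ((star_gen i ^^ d) (zeros n))"
      by (simp add: funpow_add)
    then have "(star_gen i ^^ c) (zeros n) = (star_gen i ^^ (c + d)) (zeros n) \<longleftrightarrow>
               (star_gen i ^^ d) (zeros n) = zeros n"
      using inj_fn[OF inj_star_gen, of c i] by (auto simp: inj_eq)
    then show ?thesis
      using mod_eq_dvd_iff_nat[of c "c + d" "2 ^ n"]
      by (simp add: star_gen_pow_zeros_fixed_iff[OF assms]) metis
  qed
  from this[of a "b - a"] this[of b "a - b"] show ?thesis
    by (cases "a \<le> b") auto
qed

lemma cyc_eq:
  assumes "i \<noteq> 0"
  shows "cyc i n = {w. length w = n \<and> set w \<subseteq> {0, i}}"
proof (intro set_eqI iffI)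
  fix w assume "w \<in> cyc i n"
  then obtain k where "w = (star_gen i ^^ k) (zeros n)"
    by (auto simp: cyc_def)
  then show "w \<in> {w. length w = n \<and> set w \<subseteq> {0, i}}"
    using set_star_gen_pow_subset_iff[where j = i and k = k and w = "zeros n"] set_zeros
    by (simp add: zeros_def)
next
  fix w assume "w \<in> {w. length w = n \<and> set w \<subseteq> {0, i}}"
  then have "length w = n" "set w \<subseteq> {0, i}" by auto
  then show "w \<in> cyc i n"
  proof (induction w arbitrary: n)
    case Nil
    then show ?case by (auto simp: cyc_def zeros_def intro: exI[of _ 0])
  next
    case (Cons x w)
    then obtain m where n: "n = Suc m" and "w \<in> cyc i m" by auto
    then obtain k where k: "(star_gen i ^^ k) (zeros m) = w" by (auto simp: cyc_def)
    define k' where "k' = k + 2 ^ m - 1"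
    have "(star_gen i ^^ Suc k') (zeros m) = w"
      using k star_gen_pow_zeros_eq_iff[OF assms, of "Suc k'" m k] by (simp add: k'_def)
    then have "i # w \<in> cyc i n"
      using star_gen_pow_double[OF assms, of 0 k' "zeros m"] assms
      unfolding cyc_def by (auto simp: n zeros_Suc intro!: exI[of _ "Suc (2 * k')"])
    moreover have "0 # w \<in> cyc i n"
      using star_gen_pow_double[OF assms, of 0 k "zeros m"] k
      unfolding cyc_def by (auto simp: n zeros_Suc intro!: exI[of _ "2 * k"])
    ultimately show ?case
      using Cons.prems by auto
  qed
qed

definition cyc_index :: "nat \<Rightarrow> nat \<Rightarrow> nat list \<Rightarrow> nat" where
  "cyc_index i n w = (LEAST k. (star_gen i ^^ k) (zeros n) = w)"

lemma cyc_index_pow: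
  assumes "i \<noteq> 0"
  shows "cyc_index i n ((star_gen i ^^ k) (zeros n)) = k mod 2 ^ n"
  unfolding cyc_index_def
proof (rule Least_equality)
  show "(star_gen i ^^ (k mod 2 ^ n)) (zeros n) = (star_gen i ^^ k) (zeros n)"
    by (simp add: star_gen_pow_zeros_eq_iff[OF assms])
  show "k mod 2 ^ n \<le> l" if "(star_gen i ^^ l) (zeros n) = (star_gen i ^^ k) (zeros n)" for l
    using that by (metis star_gen_pow_zeros_eq_iff[OF assms] mod_less_eq_dividend)
qed

lemma
  assumes "i \<noteq> 0" "w \<in> cyc i n"
  shows pow_cyc_index: "(star_gen i ^^ cyc_index i n w) (zeros n) = w"
    and cyc_index_less: "cyc_index i n w < 2 ^ n"
  using assms cyc_index_pow[OF assms(1)] star_gen_pow_zeros_eq_iff[OF assms(1)]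
  by (auto simp: cyc_def)

lemma phi_eq_pow: "phi i n v = (star_gen i ^^ (2 ^ n - cyc_index i n v)) (zeros n)"
  by (simp add: phi_def cyc_index_def)

fun reflect :: "nat \<Rightarrow> nat list \<Rightarrow> nat list" where
  "reflect i [] = []"
| "reflect i (x # w) = (if x = i then i # map (\<lambda>y. if y = 0 then i else 0) w else x # reflect i w)"

lemma star_gen_reflect_star_gen:
  assumes "i \<noteq> 0" "set w \<subseteq> {0, i}"
  shows "star_gen i (reflect i (star_gen i w)) = reflect i w"
proof -
  have swap_star_gen: "map (\<lambda>y. if y = 0 then i else 0) (star_gen i u) = reflect i u"
    and star_gen_reflect: "star_gen i (reflect i u) = map (\<lambda>y. if y = 0 then i else 0) u"
    if "set u \<subseteq> {0, i}" for u
    using that assms(1) by (induction u) auto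
  show ?thesis
    using assms by (cases w) (auto simp: swap_star_gen star_gen_reflect)
qed

lemma star_gen_pow_reflect_star_gen_pow:
  assumes "i \<noteq> 0" "set w \<subseteq> {0, i}"
  shows "(star_gen i ^^ k) (reflect i ((star_gen i ^^ k) w)) = reflect i w"
proof (induction k)
  case (Suc k)
  have "set ((star_gen i ^^ k) w) \<subseteq> {0, i}"
    using assms(2) set_star_gen_pow_subset_iff by blast
  have "(star_gen i ^^ Suc k) (reflect i ((star_gen i ^^ Suc k) w)) =
        (star_gen i ^^ k) (star_gen i (reflect i (star_gen i ((star_gen i ^^ k) w))))"
    by (simp add: funpow_swap1)
  then show ?case
    using Suc star_gen_reflect_star_gen[OF assms(1) \<open>set ((star_gen i ^^ k) w) \<subseteq> {0, i}\<close>]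
    by simp
qed simp

lemma reflect_zeros: "i \<noteq> 0 \<Longrightarrow> reflect i (zeros n) = zeros n"
  by (induction n) (auto simp: zeros_Suc, simp add: zeros_def)

lemma reflect_id: "i \<notin> set w \<Longrightarrow> reflect i w = w"
  by (induction w) auto

lemma reflect_append_Cons:
  "i \<noteq> 0 \<Longrightarrow> set t \<subseteq> {0} \<Longrightarrow> reflect i (t @ i # s) = t @ i # map (\<lambda>y. if y = 0 then i else 0) s"
  by (induction t) auto

lemma phi_eq_reflect:
  assumes "i \<noteq> 0" "v \<in> cyc i n"
  shows "phi i n v = reflect i v"
proof -
  let ?k = "cyc_index i n v"
  have "(star_gen i ^^ ?k) (phi i n v) = (star_gen i ^^ (?k + (2 ^ n - ?k))) (zeros n)"
    by (simp add: phi_eq_pow funpow_add)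
  also have "\<dots> = zeros n"
    using cyc_index_less[OF assms] star_gen_pow_zeros_fixed_iff[OF assms(1)] by simp
  also have "\<dots> = (star_gen i ^^ ?k) (reflect i ((star_gen i ^^ ?k) (zeros n)))"
    using star_gen_pow_reflect_star_gen_pow[OF assms(1) set_zeros, of ?k]
    by (simp add: reflect_zeros[OF assms(1)])
  also have "\<dots> = (star_gen i ^^ ?k) (reflect i v)"
    by (simp add: pow_cyc_index[OF assms])
  finally show ?thesis
    using inj_fn[OF inj_star_gen, of ?k i] by (simp add: inj_eq)
qed

lemma star_gen_in_verts: "u \<in> verts p n \<Longrightarrow> j \<in> {1..p} \<Longrightarrow> star_gen j u \<in> verts p n"
  using set_star_gen_diff[of j u] by (auto simp: verts_def)

lemma link_rel_edges_iff:
  "(a, b) \<in> link_rel (edges p n) \<longleftrightarrow>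
   (\<exists>u j. u \<in> verts p n \<and> j \<in> {1..p} \<and> {a, b} = {u, star_gen j u})"
  by (auto simp: link_rel_def edges_def ends_def)

lemma relpow_link_rel_star_gen_pow:
  assumes "u \<in> verts p n" "j \<in> {1..p}"
  shows "(u, (star_gen j ^^ k) u) \<in> link_rel (edges p n) ^^ k"
    and "((star_gen j ^^ k) u, u) \<in> link_rel (edges p n) ^^ k"
proof -
  have "(star_gen j ^^ k) u \<in> verts p n \<and>
        (u, (star_gen j ^^ k) u) \<in> link_rel (edges p n) ^^ k \<and>
        ((star_gen j ^^ k) u, u) \<in> link_rel (edges p n) ^^ k"
  proof (induction k)
    case (Suc k)
    let ?w = "(star_gen j ^^ k) u"
    have "(?w, star_gen j ?w) \<in> link_rel (edges p n)" "(star_gen j ?w, ?w) \<in> link_rel (edges p n)"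
      using Suc assms(2) unfolding link_rel_edges_iff by blast+
    then show ?case
      using Suc star_gen_in_verts[OF _ assms(2)]
      by (auto intro: relpow_Suc_I relpow_Suc_I2 simp del: relpow.simps)
  qed (simp add: assms(1))
  then show "(u, (star_gen j ^^ k) u) \<in> link_rel (edges p n) ^^ k"
    and "((star_gen j ^^ k) u, u) \<in> link_rel (edges p n) ^^ k"
    by auto
qed

lemma relpow_Lipschitz_bound:
  fixes f :: "'a \<Rightarrow> nat"
  assumes "(a, b) \<in> R ^^ k" and "\<And>x y. (x, y) \<in> R \<Longrightarrow> f y \<le> f x + 1"
  shows "f b \<le> f a + k"
  using assms(1)
proof (induction k arbitrary: b)
  case (Suc k)
  then obtain c where "(a, c) \<in> R ^^ k" "(c, b) \<in> R"
    by (auto elim: relpow_Suc_E)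
  then show ?case
    using Suc.IH assms(2) by fastforce
qed simp

text \<open>The decoration containing \<open>u\<close> is attached to the cycle at \<open>cyc_attach i u\<close>.\<close>

fun cyc_attach :: "nat \<Rightarrow> nat list \<Rightarrow> nat list" where
  "cyc_attach i [] = []"
| "cyc_attach i (x # w) = (if set (x # w) \<subseteq> {0, i} then x # w else 0 # cyc_attach i w)"

lemma cyc_attach_id: "set w \<subseteq> {0, i} \<Longrightarrow> cyc_attach i w = w"
  by (cases w) auto

lemma cyc_attach_star_gen:
  assumes "j \<noteq> 0" "i \<noteq> 0" "\<not> (j = i \<and> set u \<subseteq> {0, i})"
  shows "cyc_attach i (star_gen j u) = cyc_attach i u"
  using assms by (induction u) (auto simp: cyc_attach_id set_star_gen_subset_iff)

definition cyc_dist :: "nat \<Rightarrow> nat \<Rightarrow> nat list \<Rightarrow> nat" where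
  "cyc_dist i n w = min (cyc_index i n w) (2 ^ n - cyc_index i n w)"

lemma cyc_dist_star_gen:
  assumes "i \<noteq> 0" "w \<in> cyc i n"
  shows "cyc_dist i n (star_gen i w) \<le> cyc_dist i n w + 1"
    and "cyc_dist i n w \<le> cyc_dist i n (star_gen i w) + 1"
proof -
  let ?k = "cyc_index i n w"
  have "star_gen i w = (star_gen i ^^ Suc ?k) (zeros n)"
    by (simp add: pow_cyc_index[OF assms])
  then have "cyc_index i n (star_gen i w) = Suc ?k mod 2 ^ n"
    using cyc_index_pow[OF assms(1), of n "Suc ?k"] by simp
  moreover have "Suc ?k < 2 ^ n \<or> Suc ?k = 2 ^ n"
    using cyc_index_less[OF assms] by linarith
  ultimately show "cyc_dist i n (star_gen i w) \<le> cyc_dist i n w + 1"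
    and "cyc_dist i n w \<le> cyc_dist i n (star_gen i w) + 1"
    unfolding cyc_dist_def by auto
qed

lemma cyc_dist_cyc_attach_star_gen:
  assumes "i \<in> {1..p}" "u \<in> verts p n" "j \<in> {1..p}"
  shows "cyc_dist i n (cyc_attach i (star_gen j u)) \<le> cyc_dist i n (cyc_attach i u) + 1 \<and>
         cyc_dist i n (cyc_attach i u) \<le> cyc_dist i n (cyc_attach i (star_gen j u)) + 1"
proof (cases "j = i \<and> set u \<subseteq> {0, i}")
  case True
  then have "u \<in> cyc i n"
    using assms by (auto simp: cyc_eq verts_def)
  then show ?thesis
    using True cyc_dist_star_gen[of i u n] assms
    by (simp add: cyc_attach_id set_star_gen_subset_iff)
next
  case False
  then show ?thesis
    using assms by (simp add: cyc_attach_star_gen)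
qed

lemma gdist_zeros_eq_cyc_dist:
  assumes "i \<in> {1..p}" "v \<in> cyc i n"
  shows "gdist p n (zeros n) v = cyc_dist i n v"
  unfolding gdist_def
proof (rule Least_equality)
  have i: "i \<noteq> 0"
    using assms(1) by simp
  let ?k = "cyc_index i n v"
  have zeros: "zeros n \<in> verts p n"
    by (auto simp: verts_def zeros_def)
  have "(zeros n, v) \<in> link_rel (edges p n) ^^ ?k"
    using relpow_link_rel_star_gen_pow(1)[OF zeros assms(1), of ?k] pow_cyc_index[OF i assms(2)]
    by simp
  moreover have "(zeros n, v) \<in> link_rel (edges p n) ^^ (2 ^ n - ?k)"
  proof -
    have v: "v \<in> verts p n"
      using assms cyc_eq[OF i] by (auto simp: verts_def)
    have "(star_gen i ^^ (2 ^ n - ?k)) v = (star_gen i ^^ (2 ^ n - ?k + ?k)) (zeros n)"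
      by (simp add: funpow_add pow_cyc_index[OF i assms(2)])
    also have "\<dots> = zeros n"
      using cyc_index_less[OF i assms(2)] star_gen_pow_zeros_fixed_iff[OF i] by simp
    finally show ?thesis
      using relpow_link_rel_star_gen_pow(2)[OF v assms(1), of "2 ^ n - ?k"] by simp
  qed
  ultimately show "(zeros n, v) \<in> link_rel (edges p n) ^^ cyc_dist i n v"
    by (simp add: cyc_dist_def min_def)
  show "cyc_dist i n v \<le> d" if "(zeros n, v) \<in> link_rel (edges p n) ^^ d" for d
  proof -
    have "cyc_dist i n (cyc_attach i v) \<le> cyc_dist i n (cyc_attach i (zeros n)) + d"
      using that
    proof (rule relpow_Lipschitz_bound)
      fix x y assume "(x, y) \<in> link_rel (edges p n)"
      then show "cyc_dist i n (cyc_attach i y) \<le> cyc_dist i n (cyc_attach i x) + 1"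
        using cyc_dist_cyc_attach_star_gen[OF assms(1)] unfolding link_rel_edges_iff
        by (auto simp: doubleton_eq_iff)
    qed
    moreover have "cyc_attach i v = v" "cyc_attach i (zeros n) = zeros n"
      using assms(2) by (auto simp: cyc_attach_id cyc_eq[OF i] set_zeros)
    moreover have "cyc_dist i n (zeros n) = 0"
      using cyc_index_pow[OF i, of n 0] by (simp add: cyc_dist_def)
    ultimately show ?thesis
      by simp
  qed
qed

lemma phi_in_cyc: "phi i n v \<in> cyc i n"
  by (auto simp: phi_eq_pow cyc_def)

lemma cyc_dist_eq_iff:
  assumes "i \<noteq> 0" "v \<in> cyc i n" "w \<in> cyc i n"
  shows "cyc_dist i n w = cyc_dist i n v \<longleftrightarrow> w = v \<or> w = phi i n v"
proof -
  let ?k = "cyc_index i n v" and ?l = "cyc_index i n w"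
  have k: "?k < 2 ^ n" and l: "?l < 2 ^ n"
    using cyc_index_less assms by blast+
  have "w = v \<longleftrightarrow> ?l mod 2 ^ n = ?k mod 2 ^ n"
    using star_gen_pow_zeros_eq_iff[OF assms(1), of ?l n ?k] pow_cyc_index assms by simp
  moreover have "w = phi i n v \<longleftrightarrow> ?l mod 2 ^ n = (2 ^ n - ?k) mod 2 ^ n"
    using star_gen_pow_zeros_eq_iff[OF assms(1), of ?l n "2 ^ n - ?k"] pow_cyc_index assms
    by (simp add: phi_eq_pow)
  moreover have "min ?l (2 ^ n - ?l) = min ?k (2 ^ n - ?k) \<longleftrightarrow>
                 ?l = ?k \<or> ?l = (2 ^ n - ?k) mod 2 ^ n"
    using k l by (cases "?k = 0") (auto simp: min_def)
  ultimately show ?thesis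
    using k l by (simp add: cyc_dist_def)
qed

lemma mem_deco_edges_all_iff:
  assumes "i \<noteq> 0"
  shows "(u, j) \<in> deco_edges_all p n i \<longleftrightarrow>
         u \<in> verts p n \<and> j \<in> {1..p} \<and> \<not> (j = i \<and> set u \<subseteq> {0, i})"
  using assms by (auto simp: deco_edges_all_def edges_def cyc_eq verts_def)

lemma star_gen_eq_Cons_self_iff:
  assumes "j \<noteq> 0" "i \<noteq> 0" "set s \<subseteq> {0, i}" "\<not> (j = i \<and> set r \<subseteq> {0, i})"
  shows "star_gen j r = i # s \<longleftrightarrow> r = i # s"
  using assms by (cases r) (auto simp: set_star_gen_subset_iff)

lemma drop_star_gen_deco_edge_iff:
  assumes "(u, j) \<in> deco_edges_all p n i" "i \<noteq> 0" "set s \<subseteq> {0, i}"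
  shows "drop m (star_gen j u) = i # s \<longleftrightarrow> drop m u = i # s"
proof (cases "set (take m u) \<subseteq> {0}")
  case True
  have "set u = set (take m u) \<union> set (drop m u)"
    by (metis append_take_drop_id set_append)
  then have "\<not> (j = i \<and> set (drop m u) \<subseteq> {0, i})"
    using assms True by (auto simp: mem_deco_edges_all_iff)
  then show ?thesis
    using True assms star_gen_eq_Cons_self_iff[of j i s "drop m u"]
    by (auto simp: drop_star_gen mem_deco_edges_all_iff)
qed (simp add: drop_star_gen)

lemma star_gen_change_suffix:
  assumes "(u, j) \<in> deco_edges_all p n i" "i \<noteq> 0" "drop m u = i # s" "set s \<subseteq> {0, i}"
  shows "star_gen j (take m u @ i # s') = take m (star_gen j u) @ i # s'"
proof -
  have "set u = set (take m u) \<union> insert i (set s)"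
    using assms(3) by (metis append_take_drop_id set_append list.set(2))
  then have "set (take m u) \<subseteq> {0} \<Longrightarrow> j \<noteq> i"
    using assms by (auto simp: mem_deco_edges_all_iff)
  then show ?thesis
    using assms by (auto simp: star_gen_append take_star_gen)
qed

lemma deco_edges_all_change_suffix:
  assumes "(u, j) \<in> deco_edges_all p n i" "i \<in> {1..p}" "drop m u = i # s"
    and "set s \<subseteq> {0, i}" "set s' \<subseteq> {0, i}" "length s' = length s"
  shows "(take m u @ i # s', j) \<in> deco_edges_all p n i"
proof -
  have "set u = set (take m u) \<union> insert i (set s)"
    using assms(3) by (metis append_take_drop_id set_append list.set(2))
  moreover have "length u = m + Suc (length s)"
    using arg_cong[OF assms(3), of length] by simp
  ultimately show ?thesis
    using assms by (auto simp: mem_deco_edges_all_iff verts_def)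
qed

lemma link_rel_deco_change_suffix:
  assumes "(x, y) \<in> link_rel (deco_edges_all p n i)" "i \<in> {1..p}" "drop m x = i # s"
    and "set s \<subseteq> {0, i}" "set s' \<subseteq> {0, i}" "length s' = length s"
  shows "drop m y = i # s \<and>
         (take m x @ i # s', take m y @ i # s') \<in> link_rel (deco_edges_all p n i)"
proof -
  obtain u j where e: "(u, j) \<in> deco_edges_all p n i" and xy: "{x, y} = {u, star_gen j u}"
    using assms(1) by (auto simp: link_rel_def ends_def)
  have i: "i \<noteq> 0"
    using assms(2) by simp
  have u: "drop m u = i # s" and eu: "drop m (star_gen j u) = i # s"
    using xy assms(3) drop_star_gen_deco_edge_iff[OF e i assms(4)] by (auto simp: doubleton_eq_iff)
  have "ends (take m u @ i # s', j) = {take m x @ i # s', take m y @ i # s'}"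
    using xy star_gen_change_suffix[OF e i u assms(4)] by (auto simp: ends_def doubleton_eq_iff)
  then show ?thesis
    using xy u eu deco_edges_all_change_suffix[OF e assms(2) u assms(4-6)]
    by (auto simp: link_rel_def doubleton_eq_iff)
qed

lemma rtrancl_invariant_map:
  assumes "(a, b) \<in> R\<^sup>*" "P a" "\<And>x y. (x, y) \<in> R \<Longrightarrow> P x \<Longrightarrow> P y \<and> (f x, f y) \<in> S"
  shows "P b \<and> (f a, f b) \<in> S\<^sup>*"
  using assms(1)
  by induction (use assms(2,3) in \<open>auto intro: rtrancl_into_rtrancl\<close>)

lemma deco_verts_change_suffix:
  assumes "i \<in> {1..p}" "length t = m" "set s \<subseteq> {0, i}" "set s' \<subseteq> {0, i}" "length s' = length s"
    and "u \<in> deco_verts p n i (t @ i # s)"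
  shows "drop m u = i # s \<and> take m u @ i # s' \<in> deco_verts p n i (t @ i # s')"
proof -
  have "drop m u = i # s \<and> (take m (t @ i # s) @ i # s', take m u @ i # s') \<in> (link_rel (deco_edges_all p n i))\<^sup>*"
    using assms(6) unfolding deco_verts_def mem_Collect_eq
  proof (rule rtrancl_invariant_map[where P = "\<lambda>u. drop m u = i # s" and f = "\<lambda>u. take m u @ i # s'"])
    show "drop m (t @ i # s) = i # s"
      using assms(2) by simp
    show "drop m y = i # s \<and> (take m x @ i # s', take m y @ i # s') \<in> link_rel (deco_edges_all p n i)"
      if "(x, y) \<in> link_rel (deco_edges_all p n i)" "drop m x = i # s" for x y
      using link_rel_deco_change_suffix[OF that(1) assms(1) that(2) assms(3-5)] .
  qed
  then show ?thesis
    using assms(2) by (simp add: deco_verts_def)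
qed

lemma deco_edges_change_suffix:
  assumes "i \<in> {1..p}" "length t = m" "set s \<subseteq> {0, i}" "set s' \<subseteq> {0, i}" "length s' = length s"
    and "(u, j) \<in> deco_edges p n i (t @ i # s)"
  shows "(take m u @ i # s', j) \<in> deco_edges p n i (t @ i # s')"
    and "ends (take m u @ i # s', j) = (\<lambda>w. take m w @ i # s') ` ends (u, j)"
proof -
  have e: "(u, j) \<in> deco_edges_all p n i" and "u \<in> deco_verts p n i (t @ i # s)"
    using assms(6) by (auto simp: deco_edges_def)
  then have u: "drop m u = i # s" and "take m u @ i # s' \<in> deco_verts p n i (t @ i # s')"
    using deco_verts_change_suffix[OF assms(1-5)] by blast+
  then show "(take m u @ i # s', j) \<in> deco_edges p n i (t @ i # s')"
    using deco_edges_all_change_suffix[OF e assms(1) u assms(3-5)] by (simp add: deco_edges_def)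
  show "ends (take m u @ i # s', j) = (\<lambda>w. take m w @ i # s') ` ends (u, j)"
    using star_gen_change_suffix[OF e _ u assms(3)] assms(1) by (simp add: ends_def)
qed

lemma take_change_suffix_inverse:
  "drop m u = i # s \<Longrightarrow> take m (take m u @ i # s') @ i # s = u"
  using append_take_drop_id[of m u] by (cases "m < length u") auto

lemma mg_iso_deco_change_suffix:
  assumes "i \<in> {1..p}" "set s \<subseteq> {0, i}" "set s' \<subseteq> {0, i}" "length s' = length s"
  shows "mg_iso (deco_verts p n i (t @ i # s)) (deco_edges p n i (t @ i # s))
                (deco_verts p n i (t @ i # s')) (deco_edges p n i (t @ i # s')) ends"
proof -
  let ?m = "length t"
  let ?f = "\<lambda>u. take ?m u @ i # s'" and ?f' = "\<lambda>u. take ?m u @ i # s"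
  note verts = deco_verts_change_suffix[OF assms(1) refl assms(2-4)]
    deco_verts_change_suffix[OF assms(1) refl assms(3,2) assms(4)[symmetric]]
  note edges = deco_edges_change_suffix[OF assms(1) refl assms(2-4)]
    deco_edges_change_suffix[OF assms(1) refl assms(3,2) assms(4)[symmetric]]
  have inv: "?f' (?f u) = u" if "u \<in> deco_verts p n i (t @ i # s)" for u
    by (rule take_change_suffix_inverse) (use verts(1)[OF that] in blast)
  have inv': "?f (?f' u) = u" if "u \<in> deco_verts p n i (t @ i # s')" for u
    by (rule take_change_suffix_inverse) (use verts(2)[OF that] in blast)
  have "bij_betw ?f (deco_verts p n i (t @ i # s)) (deco_verts p n i (t @ i # s'))"
    by (rule bij_betw_byWitness[where f' = ?f']) (use verts inv inv' in auto)
  moreover have "bij_betw (\<lambda>(u, j). (?f u, j)) (deco_edges p n i (t @ i # s))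
                                              (deco_edges p n i (t @ i # s'))"
    by (rule bij_betw_byWitness[where f' = "\<lambda>(u, j). (?f' u, j)"])
      (use edges inv inv' in \<open>auto simp: deco_edges_def\<close>)
  ultimately show ?thesis
    unfolding mg_iso_def using edges(2) by fastforce
qed

lemma mg_iso_refl: "mg_iso V E V E en"
  unfolding mg_iso_def by (metis bij_betw_id id_apply image_id)

lemma mg_iso_deco_phi:
  assumes "i \<in> {1..p}" "v \<in> cyc i n"
  shows "mg_iso (deco_verts p n i v) (deco_edges p n i v)
                (deco_verts p n i (phi i n v)) (deco_edges p n i (phi i n v)) ends"
proof (cases "i \<in> set v")
  case True
  have i: "i \<noteq> 0"
    using assms(1) by simp
  obtain t s where ts: "v = t @ i # s" "i \<notin> set t"
    using True by (meson split_list_first)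
  let ?s' = "map (\<lambda>y. if y = 0 then i else 0) s"
  have "set t \<subseteq> {0}" "set s \<subseteq> {0, i}" "set ?s' \<subseteq> {0, i}"
    using assms(2) ts by (auto simp: cyc_eq[OF i])
  moreover have "phi i n v = t @ i # ?s'"
    unfolding phi_eq_reflect[OF i assms(2)] using ts \<open>set t \<subseteq> {0}\<close>
    by (simp add: reflect_append_Cons[OF i])
  ultimately show ?thesis
    using ts(1) mg_iso_deco_change_suffix[OF assms(1)] by simp
next
  case False
  then show ?thesis
    using assms by (simp add: phi_eq_reflect reflect_id mg_iso_refl)
qed

lemma gdist_zeros_level_set_cyc:
  assumes "i \<in> {1..p}" "v \<in> cyc i n"
  shows "{w \<in> cyc i n. gdist p n (zeros n) w = gdist p n (zeros n) v} = {v, phi i n v}"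
  using gdist_zeros_eq_cyc_dist[OF assms(1)] cyc_dist_eq_iff[OF _ assms(2)] assms phi_in_cyc
  by auto

theorem proposition4p9:
  fixes p n i :: nat and v :: "nat list"
  assumes "p \<ge> 1" and "n \<ge> 1" and "i \<in> {1..p}" and "v \<in> cyc i n"
  shows "mg_iso (deco_verts p n i v) (deco_edges p n i v)
                (deco_verts p n i (phi i n v)) (deco_edges p n i (phi i n v)) ends
         \<and> {v' \<in> cyc i n. gdist p n (zeros n) v' = gdist p n (zeros n) v} = {v, phi i n v}"
  using mg_iso_deco_phi[OF assms(3,4)] gdist_zeros_level_set_cyc[OF assms(3,4)] by blast

end
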